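(* Let $G=(A\cup B,E)$ be a bipartite graph with $A=\{a_1,\dots,a_r\}$ and $B=\{b_1,\dots,b_s\}$. For each edge $(a_i,b_j)\in E$ let $L_{ij}$ be the L-frame with corner $(-i,-j)$ whose vertical segment joins $(-i,-j)$ to $(-i,0)$ and whose horizontal segment joins $(-i,-j)$ to $(0,-j)$. Let $G'$ be the graph on these L-frames in the edge intersection model. Then for every $k$, $G$ has an edge dominating set of size $k$ if and only if $G'$ has a dominating set of size $k$.
   Context: An L-frame is the union of a horizontal and a vertical segment sharing an endpoint (the corner). Edge intersection model: L-frames drawn on the integer grid are adjacent iff they share at least one grid edge. An edge dominating set of a graph is a set $S$ of edges such that every edge not in $S$ shares an endpoint with some edge of $S$. A dominating set is a vertex set such that every vertex outside it has a neighbour in it. *)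

theory Defs
  imports Main
begin

text \<open>Bipartite graph G with parts A = {a_1..a_r}, B = {b_1..b_s}.
  The vertex a_i is Inl i, the vertex b_j is Inr j; an edge (a_i,b_j) is
  represented by the pair (i,j).\<close>

definition endpoints :: "nat \<times> nat \<Rightarrow> (nat + nat) set" where
  "endpoints e = {Inl (fst e), Inr (snd e)}"

definition edge_dominating_set :: "(nat \<times> nat) set \<Rightarrow> (nat \<times> nat) set \<Rightarrow> bool" where
  "edge_dominating_set E S \<longleftrightarrow> S \<subseteq> E \<and>
     (\<forall>e \<in> E - S. \<exists>f \<in> S. endpoints e \<inter> endpoints f \<noteq> {})"

text \<open>A grid edge (unit segment of the integer grid) is represented by the set
  of its two endpoints.\<close>

type_synonym grid_edge = "(int \<times> int) set"

definition hseg :: "int \<Rightarrow> int \<Rightarrow> grid_edge" where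
  "hseg x y = {(x, y), (x + 1, y)}"

definition vseg :: "int \<Rightarrow> int \<Rightarrow> grid_edge" where
  "vseg x y = {(x, y), (x, y + 1)}"

definition Lframe :: "nat \<Rightarrow> nat \<Rightarrow> grid_edge set" where
  "Lframe i j =
     {vseg (- int i) y | y. - int j \<le> y \<and> y < 0} \<union>
     {hseg x (- int j) | x. - int i \<le> x \<and> x < 0}"

definition EPG_adj :: "grid_edge set \<Rightarrow> grid_edge set \<Rightarrow> bool" where
  "EPG_adj L M \<longleftrightarrow> L \<noteq> M \<and> L \<inter> M \<noteq> {}"

definition dominating_set :: "'v set \<Rightarrow> ('v \<Rightarrow> 'v \<Rightarrow> bool) \<Rightarrow> 'v set \<Rightarrow> bool" where
  "dominating_set V adj D \<longleftrightarrow> D \<subseteq> V \<and> (\<forall>v \<in> V - D. \<exists>u \<in> D. adj u v)"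

end

theory Submission
  imports Defs
begin

text \<open>Edge dominating sets of G are exactly the dominating sets of its line graph. The L-frames
  realise that line graph: L_ij and L_i'j' share a grid edge iff i = i' (they share the top of
  the vertical segment at column -i) or j = j' (the right end of the horizontal segment at row -j).
  Since the map (i,j) \<mapsto> L_ij is injective, it is
  an isomorphism from the line graph onto G', and dominating sets correspond with their sizes.\<close>

definition line_adj :: "nat \<times> nat \<Rightarrow> nat \<times> nat \<Rightarrow> bool" where
  "line_adj e f \<longleftrightarrow> e \<noteq> f \<and> endpoints e \<inter> endpoints f \<noteq> {}"

lemma endpoints_meet_iff: "endpoints e \<inter> endpoints f \<noteq> {} \<longleftrightarrow> fst e = fst f \<or> snd e = snd f"
  by (auto simp: endpoints_def)

lemma edge_dominating_set_iff_dominating_line_graph: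
  "edge_dominating_set E S \<longleftrightarrow> dominating_set E line_adj S"
  unfolding edge_dominating_set_def dominating_set_def line_adj_def
  by (metis DiffD2 Int_commute)

lemma dominating_set_image_iff:
  assumes inj: "inj_on F V"
    and adj: "\<And>u v. u \<in> V \<Longrightarrow> v \<in> V \<Longrightarrow> adj' (F u) (F v) \<longleftrightarrow> adj u v"
    and "D \<subseteq> V"
  shows "dominating_set (F ` V) adj' (F ` D) \<longleftrightarrow> dominating_set V adj D"
proof -
  have "F v \<notin> F ` D \<longleftrightarrow> v \<notin> D" if "v \<in> V" for v
    using inj_on_image_mem_iff[OF inj \<open>v \<in> V\<close> \<open>D \<subseteq> V\<close>] by simp
  then have "(\<forall>v' \<in> F ` V - F ` D. \<exists>u' \<in> F ` D. adj' u' v') \<longleftrightarrow>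
             (\<forall>v \<in> V - D. \<exists>u \<in> D. adj u v)"
    using \<open>D \<subseteq> V\<close> adj by (simp add: Bex_def) blast
  then show ?thesis
    using \<open>D \<subseteq> V\<close> unfolding dominating_set_def by auto
qed

lemma ex_dominating_set_card_image_iff:
  assumes inj: "inj_on F V"
    and adj: "\<And>u v. u \<in> V \<Longrightarrow> v \<in> V \<Longrightarrow> adj' (F u) (F v) \<longleftrightarrow> adj u v"
  shows "(\<exists>D. dominating_set (F ` V) adj' D \<and> card D = k) \<longleftrightarrow>
         (\<exists>D. dominating_set V adj D \<and> card D = k)"
proof
  note image_iff = dominating_set_image_iff[where adj' = adj' and adj = adj, OF inj adj]
  assume "\<exists>D'. dominating_set (F ` V) adj' D' \<and> card D' = k"
  then obtain D' where D': "dominating_set (F ` V) adj' D'" "card D' = k" by blast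
  define D where "D = {v \<in> V. F v \<in> D'}"
  have "D \<subseteq> V" and "F ` D = D'"
    using D' unfolding D_def dominating_set_def by blast+
  then have "dominating_set V adj D" and "card D = k"
    using D' image_iff card_image inj_on_subset[OF inj] by metis+
  then show "\<exists>D. dominating_set V adj D \<and> card D = k" by blast
next
  note image_iff = dominating_set_image_iff[where adj' = adj' and adj = adj, OF inj adj]
  assume "\<exists>D. dominating_set V adj D \<and> card D = k"
  then obtain D where D: "dominating_set V adj D" "card D = k" by blast
  then have "D \<subseteq> V" unfolding dominating_set_def by blast
  then have "dominating_set (F ` V) adj' (F ` D)" and "card (F ` D) = k"
    using D image_iff card_image inj_on_subset[OF inj] by metis+
  then show "\<exists>D'. dominating_set (F ` V) adj' D' \<and> card D' = k" by blast
qed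

lemma vseg_eq_iff: "vseg a b = vseg c d \<longleftrightarrow> a = c \<and> b = d"
  and hseg_eq_iff: "hseg a b = hseg c d \<longleftrightarrow> a = c \<and> b = d"
  and vseg_neq_hseg: "vseg a b \<noteq> hseg c d"
  by (auto simp: vseg_def hseg_def doubleton_eq_iff)

lemma top_vseg_in_Lframe: "j \<ge> 1 \<Longrightarrow> vseg (- int i) (-1) \<in> Lframe i j"
  and right_hseg_in_Lframe: "i \<ge> 1 \<Longrightarrow> hseg (-1) (- int j) \<in> Lframe i j"
  unfolding Lframe_def by auto

lemma vseg_in_Lframe_imp: "vseg x y \<in> Lframe i j \<Longrightarrow> x = - int i"
  and hseg_in_Lframe_imp: "hseg x y \<in> Lframe i j \<Longrightarrow> y = - int j"
  unfolding Lframe_def by (auto simp: vseg_eq_iff hseg_eq_iff vseg_neq_hseg dest: sym)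

lemma Lframe_eq_iff:
  assumes "i \<ge> 1" "j \<ge> 1" "i' \<ge> 1" "j' \<ge> 1"
  shows "Lframe i j = Lframe i' j' \<longleftrightarrow> i = i' \<and> j = j'"
proof
  assume eq: "Lframe i j = Lframe i' j'"
  have "- int i = - int i'"
    using top_vseg_in_Lframe[of j i] assms eq vseg_in_Lframe_imp by metis
  moreover have "- int j = - int j'"
    using right_hseg_in_Lframe[of i j] assms eq hseg_in_Lframe_imp by metis
  ultimately show "i = i' \<and> j = j'" by simp
qed simp

lemma Lframes_meet_iff:
  assumes "i \<ge> 1" "j \<ge> 1" "i' \<ge> 1" "j' \<ge> 1"
  shows "Lframe i j \<inter> Lframe i' j' \<noteq> {} \<longleftrightarrow> i = i' \<or> j = j'"
proof
  assume "Lframe i j \<inter> Lframe i' j' \<noteq> {}"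
  then obtain g where "g \<in> Lframe i j" "g \<in> Lframe i' j'" by blast
  then show "i = i' \<or> j = j'"
    unfolding Lframe_def by (auto simp: vseg_eq_iff hseg_eq_iff vseg_neq_hseg dest: sym)
next
  assume "i = i' \<or> j = j'"
  then show "Lframe i j \<inter> Lframe i' j' \<noteq> {}"
    using top_vseg_in_Lframe right_hseg_in_Lframe assms by blast
qed

lemma EPG_adj_Lframe_iff_line_adj:
  assumes "i \<ge> 1" "j \<ge> 1" "i' \<ge> 1" "j' \<ge> 1"
  shows "EPG_adj (Lframe i j) (Lframe i' j') \<longleftrightarrow> line_adj (i, j) (i', j')"
  using Lframe_eq_iff[OF assms] Lframes_meet_iff[OF assms]
  unfolding EPG_adj_def line_adj_def endpoints_meet_iff by auto

theorem mainTheorem14: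
  fixes r s k :: nat and E :: "(nat \<times> nat) set"
  assumes "E \<subseteq> {1..r} \<times> {1..s}"
  shows "(\<exists>S. edge_dominating_set E S \<and> card S = k) \<longleftrightarrow>
         (\<exists>D. dominating_set ((\<lambda>(i, j). Lframe i j) ` E) EPG_adj D \<and> card D = k)"
proof -
  let ?L = "\<lambda>(i, j). Lframe i j"
  have pos: "fst e \<ge> 1 \<and> snd e \<ge> 1" if "e \<in> E" for e
    using assms that by auto
  have "inj_on ?L E"
  proof (rule inj_onI)
    fix e f assume "e \<in> E" "f \<in> E" "?L e = ?L f"
    then show "e = f"
      using Lframe_eq_iff pos[OF \<open>e \<in> E\<close>] pos[OF \<open>f \<in> E\<close>] by (cases e, cases f) auto
  qed
  moreover have "EPG_adj (?L e) (?L f) \<longleftrightarrow> line_adj e f" if "e \<in> E" "f \<in> E" for e f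
    using EPG_adj_Lframe_iff_line_adj pos[OF that(1)] pos[OF that(2)]
    by (cases e, cases f) auto
  ultimately show ?thesis
    unfolding edge_dominating_set_iff_dominating_line_graph
    by (rule ex_dominating_set_card_image_iff[symmetric])
qed

end
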